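(* Let $f$ be a smooth probability density on $\mathbb{R}^n$ with respect to $\gamma$ with $\int|x|^2f\,d\gamma<\infty$ and $\mathrm{I}(f)<\infty$. Let $X$ have law $f\,d\gamma$ and assume $\mathbb{E}(X)=0$. Let $N$ be an independent standard Gaussian vector and $X_t=e^{-t}X+\sqrt{1-e^{-2t}}\,N$. Set $$\rho(t)=\sup_{|\alpha|=1}\mathbb{E}\Big(\big[\mathbb{E}(\alpha\cdot X\,|\,X_t)\big]^2\Big),\quad t\ge0.$$ Then $\lim_{t\to\infty}\rho(t)=0$.
   Context: $\gamma$ is the standard Gaussian measure on $\mathbb{R}^n$ and $\mathrm{I}(f)=\int\frac{|\nabla f|^2}{f}d\gamma$. *)

theory Defs
  imports "HOL-Analysis.Analysis" "HOL-Probability.Probability"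
begin

definition std_gauss :: "(real ^ 'n) measure" where
  "std_gauss = density lborel
     (\<lambda>x. ennreal ((2 * pi) powr (- real CARD('n) / 2) * exp (- (norm x)\<^sup>2 / 2)))"

definition grad :: "(real ^ 'n \<Rightarrow> real) \<Rightarrow> real ^ 'n \<Rightarrow> real ^ 'n" where
  "grad f x = (\<chi> i. frechet_derivative f (at x) (axis i 1))"

fun Ck :: "nat \<Rightarrow> (real ^ 'n \<Rightarrow> real) \<Rightarrow> bool" where
  "Ck 0 f = continuous_on UNIV f"
| "Ck (Suc k) f = ((\<forall>x. f differentiable (at x)) \<and>
      (\<forall>i. Ck k (\<lambda>x. frechet_derivative f (at x) (axis i 1))))"

definition smooth :: "(real ^ 'n \<Rightarrow> real) \<Rightarrow> bool" where
  "smooth f = (\<forall>k. Ck k f)"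

definition fisher_info :: "(real ^ 'n \<Rightarrow> real) \<Rightarrow> ennreal" where
  "fisher_info f = (\<integral>\<^sup>+ x. ennreal ((norm (grad f x))\<^sup>2 / f x) \<partial>std_gauss)"

end

theory Submission
  imports Defs "HOL-Real_Asymp.Real_Asymp"
begin

text \<open>Fix a unit vector \<open>\<alpha>\<close> and write \<open>T = a X + s N\<close> with \<open>a = exp (- t)\<close>,
  \<open>s = sqrt (1 - exp (- 2 t))\<close>. Truncating at a large radius \<open>R\<close> splits \<open>\<alpha> \<bullet> X = \<psi>(X) + Y\<^sub>2\<close>,
  where \<open>\<psi>\<close> is bounded, supported in the ball of radius \<open>R\<close> and centred, and \<open>E Y\<^sub>2\<^sup>2\<close> is small
  uniformly in \<open>\<alpha>\<close>; conditional expectation contracts \<open>L\<^sup>2\<close>, so only \<open>\<psi>(X)\<close> matters. If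
  \<open>E(\<psi>(X) | T) = g(T)\<close>, then \<open>E g(T)\<^sup>2 = E \<psi>(X) g(T)\<close>, and conditioning on \<open>X\<close> (using that
  \<open>\<psi>(X)\<close> is centred) gives \<open>\<integral> \<psi>(x) (E g(a x + s N) - E g(s N)) d\<mu>(x)\<close>. By the Cameron--Martin
  formula the difference is the integral of \<open>g(s y)\<close> against \<open>exp (y \<bullet> v - |v|\<^sup>2/2) - 1\<close> with
  \<open>|v| \<le> a R / s\<close>, and weighted AM-GM bounds it by \<open>c E g(T)\<^sup>2 / P(|X| \<le> R) + J(a R / s) / c\<close>
  with \<open>J(b) \<rightarrow> 0\<close> as \<open>b \<rightarrow> 0\<close>. A suitable \<open>c\<close> absorbs the first term, so \<open>E g(T)\<^sup>2 \<le> 4 R\<^sup>2 J(a R / s) /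
  P(|X| \<le> R)\<close>, which tends to \<open>0\<close> since \<open>a R / s \<rightarrow> 0\<close> as \<open>t \<rightarrow> \<infinity>\<close>.\<close>

section \<open>Gaussian translations\<close>

lemma sets_std_gauss [measurable_cong, simp]: "sets std_gauss = sets borel"
  by (simp add: std_gauss_def)

lemma space_std_gauss [simp]: "space std_gauss = UNIV"
  by (simp add: std_gauss_def)

definition gauss_shift_density :: "real ^ 'n \<Rightarrow> real ^ 'n \<Rightarrow> real" where
  "gauss_shift_density v y = exp (y \<bullet> v - (norm v)\<^sup>2 / 2)"

lemma gauss_shift_density_measurable [measurable]: "gauss_shift_density v \<in> borel_measurable borel"
  unfolding gauss_shift_density_def by simp

lemma gauss_shift_density_nonneg [simp]: "0 \<le> gauss_shift_density v y"
  by (simp add: gauss_shift_density_def)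

lemma distr_std_gauss_translate:
  fixes v :: "real ^ 'n"
  shows "distr std_gauss borel (\<lambda>y. y + v) = density std_gauss (gauss_shift_density v)"
proof (rule measure_eqI)
  fix A :: "(real ^ 'n) set"
  assume "A \<in> sets (distr std_gauss borel (\<lambda>y. y + v))"
  then have A [measurable]: "A \<in> sets borel" by simp
  define C where "C = (2 * pi) powr (- real CARD('n) / 2)"
  have C: "0 \<le> C" by (simp add: C_def)
  have completed_square: "ennreal (C * exp (- (norm (v + x))\<^sup>2 / 2)) * ennreal (gauss_shift_density v (v + x))
      = ennreal (C * exp (- (norm x)\<^sup>2 / 2))" for x :: "real ^ 'n"
  proof -
    have "- (norm (v + x))\<^sup>2 / 2 + ((v + x) \<bullet> v - (norm v)\<^sup>2 / 2) = - (norm x)\<^sup>2 / 2"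
      by (simp add: power2_norm_eq_inner inner_add_left inner_add_right inner_commute field_simps)
    then show ?thesis
      using C by (simp add: gauss_shift_density_def ennreal_mult[symmetric] mult.assoc exp_add[symmetric])
  qed
  have "emeasure (distr std_gauss borel (\<lambda>y. y + v)) A
      = (\<integral>\<^sup>+ x. ennreal (C * exp (- (norm x)\<^sup>2 / 2)) * indicator A (x + v) \<partial>lborel)"
    unfolding std_gauss_def C_def
    by (subst emeasure_distr, simp_all, subst emeasure_density)
      (auto intro!: nn_integral_cong measurable_sets_borel[OF _ A] split: split_indicator)
  also have "\<dots> = (\<integral>\<^sup>+ x. ennreal (C * exp (- (norm (v + x))\<^sup>2 / 2))
      * ennreal (gauss_shift_density v (v + x)) * indicator A (v + x) \<partial>lborel)"
    by (intro nn_integral_cong) (simp only: completed_square, simp add: add.commute)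
  also have "\<dots> = (\<integral>\<^sup>+ x. ennreal (C * exp (- (norm x)\<^sup>2 / 2))
      * ennreal (gauss_shift_density v x) * indicator A x \<partial>distr lborel borel ((+) v))"
    by (subst nn_integral_distr) auto
  also have "\<dots> = emeasure (density std_gauss (gauss_shift_density v)) A"
    unfolding lborel_distr_plus std_gauss_def C_def
    by (simp add: emeasure_density nn_integral_density mult.assoc)
  finally show "emeasure (distr std_gauss borel (\<lambda>y. y + v)) A
      = emeasure (density std_gauss (gauss_shift_density v)) A" .
qed (simp add: std_gauss_def)

lemma nn_integral_std_gauss_translate:
  assumes [measurable]: "h \<in> borel_measurable borel"
  shows "(\<integral>\<^sup>+ y. h (y + v) \<partial>std_gauss) = (\<integral>\<^sup>+ y. ennreal (gauss_shift_density v y) * h y \<partial>std_gauss)"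
  using nn_integral_distr[of "\<lambda>y. y + v" std_gauss borel h]
  by (simp add: distr_std_gauss_translate nn_integral_density)

lemma integral_std_gauss_translate:
  fixes G :: "real ^ 'n \<Rightarrow> real"
  assumes [measurable]: "G \<in> borel_measurable borel"
  shows "(\<integral> y. G (y + v) \<partial>std_gauss) = (\<integral> y. gauss_shift_density v y * G y \<partial>std_gauss)"
  using integral_distr[of "\<lambda>y. y + v" std_gauss borel G]
  by (simp add: distr_std_gauss_translate integral_density)

text \<open>Normalisation of \<open>std_gauss\<close> is carried as a hypothesis; in the application it follows from
  \<open>N\<close> having law \<open>std_gauss\<close>.\<close>

lemma integrable_std_gauss_exp_inner:
  assumes "prob_space (std_gauss :: (real ^ 'n) measure)"
  shows "integrable (std_gauss :: (real ^ 'n) measure) (\<lambda>y. exp (y \<bullet> v))"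
proof -
  interpret prob_space "std_gauss :: (real ^ 'n) measure" by fact
  have "(\<integral>\<^sup>+ y. ennreal (gauss_shift_density v y) \<partial>(std_gauss :: (real ^ 'n) measure)) = 1"
    using nn_integral_std_gauss_translate[of "\<lambda>_. 1" v] emeasure_space_1 by simp
  then have "integrable std_gauss (\<lambda>y. exp ((norm v)\<^sup>2 / 2) * gauss_shift_density v y)"
    by (intro integrable_mult_right integrableI_nonneg) (auto simp: gauss_shift_density_def)
  then show ?thesis
    by (simp add: gauss_shift_density_def exp_add[symmetric])
qed

lemma integrable_std_gauss_exp_component:
  assumes "prob_space (std_gauss :: (real ^ 'n) measure)"
  shows "integrable (std_gauss :: (real ^ 'n) measure) (\<lambda>y. exp (c * y $ i))"
  using integrable_std_gauss_exp_inner[OF assms, of "c *\<^sub>R axis i 1"]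
  by (simp add: inner_axis mult.commute)

lemma integrable_std_gauss_exp_norm:
  assumes "prob_space (std_gauss :: (real ^ 'n) measure)"
  shows "integrable (std_gauss :: (real ^ 'n) measure) (\<lambda>y. exp (c * norm y))"
proof (rule Bochner_Integration.integrable_bound)
  define k where "k = \<bar>c\<bar> * real CARD('n)"
  define H where "H y = (\<Sum>i\<in>UNIV. exp (k * y $ i) + exp (- k * y $ i))" for y :: "real ^ 'n"
  show "integrable std_gauss H"
    unfolding H_def by (intro Bochner_Integration.integrable_sum Bochner_Integration.integrable_add
        integrable_std_gauss_exp_component assms)
  have "exp (c * norm y) \<le> H y" for y :: "real ^ 'n"
  proof -
    have "Max (range (\<lambda>i. \<bar>y $ i\<bar>)) \<in> range (\<lambda>i. \<bar>y $ i\<bar>)"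
      by (rule Max_in) auto
    then obtain i0 where i0: "\<bar>y $ i0\<bar> = Max (range (\<lambda>i. \<bar>y $ i\<bar>))"
      by (metis rangeE)
    then have i0: "\<bar>y $ i\<bar> \<le> \<bar>y $ i0\<bar>" for i
      by simp
    have "c * norm y \<le> \<bar>c\<bar> * (\<Sum>i\<in>UNIV. \<bar>y $ i\<bar>)"
      using abs_ge_self[of c] norm_le_l1_cart[of y]
      by (meson abs_ge_zero mult_left_mono mult_right_mono norm_ge_zero order_trans)
    also have "\<dots> \<le> \<bar>c\<bar> * (\<Sum>i\<in>(UNIV::'n set). \<bar>y $ i0\<bar>)"
      by (intro mult_left_mono sum_mono i0) auto
    also have "\<dots> = \<bar>k * y $ i0\<bar>"
      by (simp add: k_def abs_mult)
    finally have "exp (c * norm y) \<le> exp (k * y $ i0) + exp (- k * y $ i0)"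
      by (cases "0 \<le> k * y $ i0") (auto intro: add_increasing add_increasing2)
    also have "\<dots> \<le> H y"
      unfolding H_def by (rule member_le_sum) (auto intro: add_nonneg_nonneg)
    finally show ?thesis .
  qed
  then show "AE y in std_gauss. norm (exp (c * norm y)) \<le> norm (H y)"
    by (intro AE_I2) (simp add: order_trans[OF _ abs_ge_self])
qed simp

text \<open>For \<open>norm v \<le> b\<close>, \<open>shift_bound b y\<close> bounds the exponent of \<open>gauss_shift_density v y\<close>
  (\<open>abs_gauss_shift_exponent_le\<close>); \<open>shift_defect b y = ((exp \<delta> - 1) * exp (\<delta> / 2))\<^sup>2\<close> with
  \<open>\<delta> = shift_bound b y\<close> is what AM-GM leaves after the weight \<open>exp (- \<delta> / 2)\<close> is split off.\<close>

definition shift_bound :: "real \<Rightarrow> real ^ 'n \<Rightarrow> real" where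
  "shift_bound b y = b * norm y + b\<^sup>2"

definition shift_defect :: "real \<Rightarrow> real ^ 'n \<Rightarrow> real" where
  "shift_defect b y = exp (shift_bound b y) * (exp (shift_bound b y) - 1)\<^sup>2"

lemma shift_bound_measurable [measurable]: "shift_bound b \<in> borel_measurable borel"
  unfolding shift_bound_def by simp

lemma shift_defect_measurable [measurable]: "shift_defect b \<in> borel_measurable borel"
  unfolding shift_defect_def by simp

lemma shift_bound_nonneg: "0 \<le> b \<Longrightarrow> 0 \<le> shift_bound b y"
  by (simp add: shift_bound_def)

lemma shift_bound_le: "0 \<le> b \<Longrightarrow> b \<le> 1 \<Longrightarrow> shift_bound b y \<le> norm y + 1"
  unfolding shift_bound_def by (intro add_mono) (auto simp: mult_left_le_one_le power_le_one)

lemma abs_gauss_shift_exponent_le: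
  assumes "norm v \<le> b"
  shows "\<bar>y \<bullet> v - (norm v)\<^sup>2 / 2\<bar> \<le> shift_bound b y"
proof -
  have "\<bar>y \<bullet> v\<bar> \<le> b * norm y"
    using Cauchy_Schwarz_ineq2[of y v] mult_left_mono[OF assms norm_ge_zero, of y]
    by (simp add: mult.commute)
  moreover have "(norm v)\<^sup>2 \<le> b\<^sup>2"
    using assms by (intro power_mono) auto
  ultimately show ?thesis
    unfolding shift_bound_def using zero_le_power2[of "norm v"] by arith
qed

lemma shift_defect_nonneg: "0 \<le> shift_defect b y"
  by (simp add: shift_defect_def)

lemma shift_defect_le:
  assumes "0 \<le> b" "b \<le> 1"
  shows "shift_defect b y \<le> exp 3 * exp (3 * norm y)"
proof -
  have "shift_defect b y \<le> exp (shift_bound b y) * (exp (shift_bound b y))\<^sup>2"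
    unfolding shift_defect_def using shift_bound_nonneg[OF assms(1)]
    by (intro mult_left_mono power_mono) auto
  also have "\<dots> = exp (3 * shift_bound b y)"
    by (simp add: power2_eq_square exp_add[symmetric])
  also have "\<dots> \<le> exp 3 * exp (3 * norm y)"
    using shift_bound_le[OF assms, of y] by (simp add: exp_add[symmetric])
  finally show ?thesis .
qed

lemma integrable_shift_defect:
  assumes "prob_space (std_gauss :: (real ^ 'n) measure)" "0 \<le> b" "b \<le> 1"
  shows "integrable (std_gauss :: (real ^ 'n) measure) (shift_defect b)"
proof (rule Bochner_Integration.integrable_bound)
  show "integrable std_gauss (\<lambda>y::real ^ 'n. exp 3 * exp (3 * norm y))"
    using integrable_std_gauss_exp_norm[OF assms(1), of 3] by simp
  show "AE y in std_gauss. norm (shift_defect b y) \<le> norm (exp 3 * exp (3 * norm (y :: real ^ 'n)))"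
    using shift_defect_le[OF assms(2,3)] by (intro AE_I2) (simp add: abs_of_nonneg shift_defect_nonneg)
qed simp

lemma integrable_exp_shift_bound:
  assumes "prob_space (std_gauss :: (real ^ 'n) measure)" "0 \<le> b" "b \<le> 1"
  shows "integrable (std_gauss :: (real ^ 'n) measure) (\<lambda>y. exp (shift_bound b y))"
proof (rule Bochner_Integration.integrable_bound)
  show "integrable std_gauss (\<lambda>y::real ^ 'n. exp 1 * exp (1 * norm y))"
    using integrable_std_gauss_exp_norm[OF assms(1), of 1] by simp
  show "AE y in std_gauss. norm (exp (shift_bound b y)) \<le> norm (exp 1 * exp (1 * norm (y :: real ^ 'n)))"
    using shift_bound_le[OF assms(2,3)] by (intro AE_I2) (simp add: exp_add[symmetric] add.commute)
qed simp

lemma tendsto_integral_shift_defect: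
  assumes "prob_space (std_gauss :: (real ^ 'n) measure)"
  shows "((\<lambda>b. \<integral>y. shift_defect b y \<partial>(std_gauss :: (real ^ 'n) measure)) \<longlongrightarrow> 0) (at_right 0)"
proof -
  let ?w = "\<lambda>y::real ^ 'n. exp 3 * exp (3 * norm y)"
  let ?g = "std_gauss :: (real ^ 'n) measure"
  have "((\<lambda>t. \<integral>y. shift_defect (inverse t) y \<partial>?g) \<longlongrightarrow> (\<integral>y. 0 \<partial>?g)) at_top"
  proof (rule integral_dominated_convergence_at_top[where w="?w"])
    show "integrable ?g ?w"
      using integrable_std_gauss_exp_norm[OF assms, of 3] by simp
    have "((\<lambda>t. shift_defect (inverse t) y) \<longlongrightarrow> shift_defect 0 y) at_top" for y :: "real ^ 'n"
      unfolding shift_defect_def shift_bound_def by (intro tendsto_intros tendsto_inverse_0_at_top filterlim_ident)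
    then have "((\<lambda>t. shift_defect (inverse t) y) \<longlongrightarrow> 0) at_top" for y :: "real ^ 'n"
      by (simp add: shift_defect_def shift_bound_def)
    then show "AE y in ?g. ((\<lambda>t. shift_defect (inverse t) y) \<longlongrightarrow> 0) at_top"
      by simp
    have "eventually (\<lambda>t::real. 0 \<le> inverse t \<and> inverse t \<le> 1) at_top"
      using eventually_ge_at_top[of 1] by eventually_elim (auto simp: inverse_le_1_iff)
    then show "\<forall>\<^sub>F t in at_top. AE y in ?g. norm (shift_defect (inverse t) y) \<le> ?w y"
      by eventually_elim (auto simp: abs_of_nonneg shift_defect_nonneg intro!: AE_I2 shift_defect_le)
  qed simp_all
  then show ?thesis
    unfolding filterlim_at_right_to_top by simp
qed

lemma mult_le_weighted_sum_squares:
  fixes u w c :: real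
  assumes "0 < c"
  shows "u * w \<le> (c * u\<^sup>2 + w\<^sup>2 / c) / 2"
proof -
  have "0 \<le> (c * u - w)\<^sup>2 / c"
    using assms by simp
  then show ?thesis
    using assms by (simp add: power2_eq_square field_simps)
qed

lemma abs_exp_sub_one_le:
  fixes w d :: real
  assumes "\<bar>w\<bar> \<le> d"
  shows "\<bar>exp w - 1\<bar> \<le> exp d - 1"
proof (cases "0 \<le> w")
  case False
  have "1 - exp w \<le> - w" "d \<le> exp d - 1"
    using exp_ge_add_one_self[of w] exp_ge_add_one_self[of d] by linarith+
  then show ?thesis
    using False assms by auto
qed (use assms in auto)

lemma exp_half_square: "(exp (a / 2))\<^sup>2 = exp (a :: real)"
  using exp_double[of "a / 2"] by simp

lemma abs_exp_mult_sub_le: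
  fixes w d c g :: real
  assumes "\<bar>w\<bar> \<le> d" "0 < c"
  shows "\<bar>exp w * g - g\<bar> \<le> (c * (exp (- d) * g\<^sup>2) + exp d * (exp d - 1)\<^sup>2 / c) / 2"
proof -
  have "\<bar>exp w * g - g\<bar> = \<bar>g\<bar> * \<bar>exp w - 1\<bar>"
    by (simp add: abs_mult[symmetric] algebra_simps)
  also have "\<dots> \<le> \<bar>g\<bar> * (exp d - 1)"
    by (intro mult_left_mono abs_exp_sub_one_le assms) simp
  also have "\<dots> = (\<bar>g\<bar> * exp (- d / 2)) * ((exp d - 1) * exp (d / 2))"
    by (simp add: algebra_simps exp_add[symmetric])
  also have "\<dots> \<le> (c * (\<bar>g\<bar> * exp (- d / 2))\<^sup>2 + ((exp d - 1) * exp (d / 2))\<^sup>2 / c) / 2"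
    by (rule mult_le_weighted_sum_squares[OF assms(2)])
  also have "\<dots> = (c * (exp (- d) * g\<^sup>2) + exp d * (exp d - 1)\<^sup>2 / c) / 2"
  proof -
    have "(\<bar>g\<bar> * exp (- d / 2))\<^sup>2 = exp (- d) * g\<^sup>2"
      and "((exp d - 1) * exp (d / 2))\<^sup>2 = exp d * (exp d - 1)\<^sup>2"
      by (simp_all only: power_mult_distrib power2_abs exp_half_square mult.commute)
    then show ?thesis by simp
  qed
  finally show ?thesis .
qed

lemma nn_integral_std_gauss_translate_square_ge:
  fixes G :: "real ^ 'n \<Rightarrow> real"
  assumes [measurable]: "G \<in> borel_measurable borel" and v: "norm v \<le> b"
  shows "(\<integral>\<^sup>+ y. ennreal (exp (- shift_bound b y) * (G y)\<^sup>2) \<partial>std_gauss)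
    \<le> (\<integral>\<^sup>+ y. ennreal ((G (y + v))\<^sup>2) \<partial>std_gauss)"
proof -
  have "exp (- shift_bound b y) \<le> gauss_shift_density v y" for y
    using abs_gauss_shift_exponent_le[OF v, of y] by (simp add: gauss_shift_density_def)
  then have "ennreal (exp (- shift_bound b y) * (G y)\<^sup>2) \<le> ennreal (gauss_shift_density v y * (G y)\<^sup>2)"
    for y by (intro ennreal_leI mult_right_mono) auto
  then have "(\<integral>\<^sup>+ y. ennreal (exp (- shift_bound b y) * (G y)\<^sup>2) \<partial>std_gauss)
      \<le> (\<integral>\<^sup>+ y. ennreal (gauss_shift_density v y) * ennreal ((G y)\<^sup>2) \<partial>std_gauss)"
    by (simp add: nn_integral_mono ennreal_mult')
  also have "\<dots> = (\<integral>\<^sup>+ y. ennreal ((G (y + v))\<^sup>2) \<partial>std_gauss)"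
    by (rule nn_integral_std_gauss_translate[symmetric]) simp
  finally show ?thesis .
qed

lemma integral_std_gauss_translate_diff_le:
  fixes G :: "real ^ 'n \<Rightarrow> real"
  assumes gauss: "prob_space (std_gauss :: (real ^ 'n) measure)"
    and [measurable]: "G \<in> borel_measurable borel"
    and v: "norm v \<le> b" and b: "0 \<le> b" "b \<le> 1" and c: "0 < c"
    and Q: "integrable std_gauss (\<lambda>y. exp (- shift_bound b y) * (G y)\<^sup>2)"
  shows "\<bar>(\<integral> y. G (y + v) \<partial>std_gauss) - (\<integral> y. G y \<partial>std_gauss)\<bar>
    \<le> (c * (\<integral> y. exp (- shift_bound b y) * (G y)\<^sup>2 \<partial>std_gauss)
        + (\<integral> y. shift_defect b y \<partial>(std_gauss :: (real ^ 'n) measure)) / c) / 2"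
proof -
  let ?\<delta> = "shift_bound b" and ?Q = "\<lambda>y. exp (- shift_bound b y) * (G y)\<^sup>2"
  let ?bound = "\<lambda>y. (c * ?Q y + shift_defect b y / c) / 2"
  have diff: "\<bar>gauss_shift_density v y * G y - G y\<bar> \<le> ?bound y" for y
    using abs_exp_mult_sub_le[OF abs_gauss_shift_exponent_le[OF v] c]
    by (simp add: gauss_shift_density_def shift_defect_def)
  have int_bound: "integrable std_gauss ?bound"
    using Q integrable_shift_defect[OF gauss b] by simp
  have int_diff: "integrable std_gauss (\<lambda>y. gauss_shift_density v y * G y - G y)"
    using diff by (rule_tac Bochner_Integration.integrable_bound[OF int_bound])
      (auto intro!: AE_I2 order_trans[OF _ abs_ge_self])
  have int_G: "integrable std_gauss G"
  proof (rule Bochner_Integration.integrable_bound)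
    show "integrable std_gauss (\<lambda>y. (?Q y + exp (?\<delta> y)) / 2)"
      using Q integrable_exp_shift_bound[OF gauss b] by simp
    have "\<bar>G y\<bar> \<le> (?Q y + exp (?\<delta> y)) / 2" for y
    proof -
      have "\<bar>G y\<bar> = (\<bar>G y\<bar> * exp (- ?\<delta> y / 2)) * exp (?\<delta> y / 2)"
        by (simp add: exp_add[symmetric])
      also have "\<dots> \<le> (1 * (\<bar>G y\<bar> * exp (- ?\<delta> y / 2))\<^sup>2 + (exp (?\<delta> y / 2))\<^sup>2 / 1) / 2"
        by (rule mult_le_weighted_sum_squares) simp
      also have "\<dots> = (?Q y + exp (?\<delta> y)) / 2"
        by (simp only: power_mult_distrib power2_abs exp_half_square mult_1 div_by_1 mult.commute)
      finally show ?thesis .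
    qed
    then show "AE y in std_gauss. norm (G y) \<le> norm ((?Q y + exp (?\<delta> y)) / 2)"
      by (intro AE_I2) (simp add: order_trans[OF _ abs_ge_self])
  qed simp
  have "(\<integral> y. G (y + v) \<partial>std_gauss) - (\<integral> y. G y \<partial>std_gauss)
      = (\<integral> y. gauss_shift_density v y * G y - G y \<partial>std_gauss)"
  proof -
    have "integrable std_gauss (\<lambda>y. gauss_shift_density v y * G y)"
      using Bochner_Integration.integrable_add[OF int_diff int_G] by simp
    then show ?thesis
      using int_G by (simp add: integral_std_gauss_translate)
  qed
  also have "\<bar>\<dots>\<bar> \<le> (\<integral> y. ?bound y \<partial>std_gauss)"
    using int_diff int_bound diff by (intro integral_abs_bound_integral) auto
  also have "\<dots> = (c * (\<integral> y. ?Q y \<partial>std_gauss) + (\<integral> y. shift_defect b y \<partial>(std_gauss :: (real ^ 'n) measure)) / c) / 2"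
    using Q integrable_shift_defect[OF gauss b] by simp
  finally show ?thesis .
qed

section \<open>Independence and conditional expectation\<close>

lemma (in prob_space) distr_indep_var_pair:
  assumes "indep_var S X T Y"
  shows "distr M (S \<Otimes>\<^sub>M T) (\<lambda>\<omega>. (X \<omega>, Y \<omega>)) = distr M S X \<Otimes>\<^sub>M distr M T Y"
    and "pair_prob_space (distr M S X) (distr M T Y)"
proof -
  have X: "random_variable S X" and Y: "random_variable T Y"
    and "distr M S X \<Otimes>\<^sub>M distr M T Y = distr M (S \<Otimes>\<^sub>M T) (\<lambda>\<omega>. (X \<omega>, Y \<omega>))"
    using assms unfolding indep_var_distribution_eq by auto
  then show "distr M (S \<Otimes>\<^sub>M T) (\<lambda>\<omega>. (X \<omega>, Y \<omega>)) = distr M S X \<Otimes>\<^sub>M distr M T Y"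
    by simp
  show "pair_prob_space (distr M S X) (distr M T Y)"
    using prob_space_distr[OF X] prob_space_distr[OF Y]
    by (simp add: pair_prob_space_def pair_sigma_finite_def prob_space_imp_sigma_finite)
qed

lemma (in prob_space) nn_integral_indep_var:
  assumes indep: "indep_var S X T Y" and [measurable]: "(\<lambda>(x, y). h x y) \<in> borel_measurable (S \<Otimes>\<^sub>M T)"
  shows "(\<integral>\<^sup>+ \<omega>. h (X \<omega>) (Y \<omega>) \<partial>M) = (\<integral>\<^sup>+ x. \<integral>\<^sup>+ y. h x y \<partial>distr M T Y \<partial>distr M S X)"
proof -
  interpret XY: pair_prob_space "distr M S X" "distr M T Y"
    by (rule distr_indep_var_pair(2)[OF indep])
  have [measurable]: "X \<in> measurable M S" "Y \<in> measurable M T"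
    using indep by (auto dest: indep_var_rv1 indep_var_rv2)
  have "(\<integral>\<^sup>+ \<omega>. h (X \<omega>) (Y \<omega>) \<partial>M) = (\<integral>\<^sup>+ z. (\<lambda>(x, y). h x y) z \<partial>distr M (S \<Otimes>\<^sub>M T) (\<lambda>\<omega>. (X \<omega>, Y \<omega>)))"
    by (simp add: nn_integral_distr)
  also have "\<dots> = (\<integral>\<^sup>+ x. \<integral>\<^sup>+ y. h x y \<partial>distr M T Y \<partial>distr M S X)"
    unfolding distr_indep_var_pair(1)[OF indep] by (subst XY.M2.nn_integral_fst[symmetric]) simp_all
  finally show ?thesis .
qed

lemma (in prob_space) integral_indep_var:
  fixes h :: "'b \<Rightarrow> 'b \<Rightarrow> real"
  assumes indep: "indep_var S X T Y" and [measurable]: "(\<lambda>(x, y). h x y) \<in> borel_measurable (S \<Otimes>\<^sub>M T)"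
    and int: "integrable M (\<lambda>\<omega>. h (X \<omega>) (Y \<omega>))"
  shows "integrable (distr M S X) (\<lambda>x. \<integral> y. h x y \<partial>distr M T Y)"
    and "(\<integral> \<omega>. h (X \<omega>) (Y \<omega>) \<partial>M) = (\<integral> x. \<integral> y. h x y \<partial>distr M T Y \<partial>distr M S X)"
proof -
  interpret XY: pair_prob_space "distr M S X" "distr M T Y"
    by (rule distr_indep_var_pair(2)[OF indep])
  have [measurable]: "X \<in> measurable M S" "Y \<in> measurable M T"
    using indep by (auto dest: indep_var_rv1 indep_var_rv2)
  have h: "integrable (distr M S X \<Otimes>\<^sub>M distr M T Y) (\<lambda>(x, y). h x y)"
    using int by (simp add: integrable_distr_eq distr_indep_var_pair(1)[OF indep, symmetric])
  show "integrable (distr M S X) (\<lambda>x. \<integral> y. h x y \<partial>distr M T Y)"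
    using XY.integrable_fst'[OF h] by simp
  have "(\<integral> \<omega>. h (X \<omega>) (Y \<omega>) \<partial>M) = (\<integral> z. (\<lambda>(x, y). h x y) z \<partial>distr M (S \<Otimes>\<^sub>M T) (\<lambda>\<omega>. (X \<omega>, Y \<omega>)))"
    by (simp add: integral_distr)
  also have "\<dots> = (\<integral> x. \<integral> y. h x y \<partial>distr M T Y \<partial>distr M S X)"
    unfolding distr_indep_var_pair(1)[OF indep] using XY.integral_fst'[OF h] by simp
  finally show "(\<integral> \<omega>. h (X \<omega>) (Y \<omega>) \<partial>M) = (\<integral> x. \<integral> y. h x y \<partial>distr M T Y \<partial>distr M S X)" .
qed

lemma vimage_algebra_measurable_factor_ennreal:
  fixes T :: "'a \<Rightarrow> 'b" and u :: "'a \<Rightarrow> ennreal"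
  assumes T: "T \<in> S \<rightarrow> space N" and u: "u \<in> borel_measurable (vimage_algebra S T N)"
  shows "\<exists>g\<in>borel_measurable N. \<forall>x\<in>S. u x = g (T x)"
  using u
proof (induction rule: borel_measurable_induct)
  case (cong f h)
  then obtain g where "g \<in> borel_measurable N" "\<forall>x\<in>S. h x = g (T x)" by blast
  with cong(3) show ?case by auto
next
  case (set A)
  then obtain B where "B \<in> sets N" "A = T -` B \<inter> S"
    using sets_vimage_algebra2[OF T] by blast
  then show ?case
    by (intro bexI[of _ "indicator B"]) (auto split: split_indicator)
next
  case (mult u c)
  then obtain g where "g \<in> borel_measurable N" "\<forall>x\<in>S. u x = g (T x)" by blast
  then show ?case by (intro bexI[of _ "\<lambda>y. c * g y"]) auto
next
  case (add u v)
  then obtain g h where "g \<in> borel_measurable N" "\<forall>x\<in>S. u x = g (T x)"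
    and "h \<in> borel_measurable N" "\<forall>x\<in>S. v x = h (T x)" by blast
  then show ?case by (intro bexI[of _ "\<lambda>y. h y + g y"]) auto
next
  case (seq U)
  then obtain g where g: "\<And>i. g i \<in> borel_measurable N" "\<And>i x. x \<in> S \<Longrightarrow> U i x = g i (T x)"
    by metis
  then show ?case
    by (intro bexI[of _ "\<lambda>y. SUP i. g i y"] ballI) (auto simp: image_comp)
qed

lemma vimage_algebra_measurable_factor:
  fixes T :: "'a \<Rightarrow> 'b" and u :: "'a \<Rightarrow> real"
  assumes T: "T \<in> S \<rightarrow> space N" and u: "u \<in> borel_measurable (vimage_algebra S T N)"
  shows "\<exists>g\<in>borel_measurable N. \<forall>x\<in>S. u x = g (T x)"
proof -
  obtain g1 g2 where g: "g1 \<in> borel_measurable N" "g2 \<in> borel_measurable N"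
    and g12: "\<forall>x\<in>S. ennreal (u x) = g1 (T x)" "\<forall>x\<in>S. ennreal (- u x) = g2 (T x)"
    using vimage_algebra_measurable_factor_ennreal[OF T, of "\<lambda>x. ennreal (u x)"]
      vimage_algebra_measurable_factor_ennreal[OF T, of "\<lambda>x. ennreal (- u x)"] u
    by (metis measurable_compose[OF _ measurable_ennreal] borel_measurable_uminus)
  have "u x = enn2real (g1 (T x)) - enn2real (g2 (T x))" if "x \<in> S" for x
  proof -
    have "g1 (T x) = ennreal (u x)" "g2 (T x) = ennreal (- u x)"
      using g12 that by auto
    then show ?thesis
      by (cases "0 \<le> u x") (auto simp: ennreal_neg)
  qed
  then show ?thesis
    using g by (intro bexI[of _ "\<lambda>y. enn2real (g1 y) - enn2real (g2 y)"]) auto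
qed

lemma (in finite_measure) integrable_bounded:
  fixes f :: "'a \<Rightarrow> real"
  assumes [measurable]: "f \<in> borel_measurable M" and bound: "\<And>x. x \<in> space M \<Longrightarrow> \<bar>f x\<bar> \<le> K"
  shows "integrable M f" and "integrable M (\<lambda>x. (f x)\<^sup>2)"
proof -
  show "integrable M f"
    using bound by (rule_tac Bochner_Integration.integrable_bound[OF integrable_const[of K]])
      (auto intro!: AE_I2 order_trans[OF _ abs_ge_self])
  have "(f x)\<^sup>2 \<le> K\<^sup>2" if "x \<in> space M" for x
    using power_mono[OF bound[OF that] abs_ge_zero, of 2] by simp
  then show "integrable M (\<lambda>x. (f x)\<^sup>2)"
    by (rule_tac Bochner_Integration.integrable_bound[OF integrable_const[of "K\<^sup>2"]])
      (auto intro!: AE_I2)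
qed

lemma sigma_finite_subalgebra_vimage_algebra:
  assumes "prob_space M" and "T \<in> measurable M N"
  shows "sigma_finite_subalgebra M (vimage_algebra (space M) T N)"
proof -
  interpret prob_space M by fact
  have "sets (vimage_algebra (space M) T N) \<subseteq> sets M"
    using assms(2) by (auto simp: sets_vimage_algebra2 measurable_space)
  then have "finite_measure_subalgebra M (vimage_algebra (space M) T N)"
    by (simp add: finite_measure_subalgebra_def finite_measure_subalgebra_axioms_def
        subalgebra_def finite_measure_axioms)
  then show ?thesis
    by (rule finite_measure_subalgebra_is_sigma_finite)
qed

lemma (in sigma_finite_subalgebra) real_cond_exp_square:
  assumes Y: "integrable M Y" and Y2: "integrable M (\<lambda>x. (Y x)\<^sup>2)"
  shows "integrable M (\<lambda>x. (real_cond_exp M F Y x)\<^sup>2)"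
    and "(\<integral> x. (real_cond_exp M F Y x)\<^sup>2 \<partial>M) \<le> (\<integral> x. (Y x)\<^sup>2 \<partial>M)"
    and "(\<integral> x. (real_cond_exp M F Y x)\<^sup>2 \<partial>M) = (\<integral> x. real_cond_exp M F Y x * Y x \<partial>M)"
proof -
  have q: "(\<lambda>x::real. x\<^sup>2) \<in> borel_measurable borel"
    by measurable
  have int: "integrable M (\<lambda>x. (real_cond_exp M F Y x)\<^sup>2)"
    using integrable_convex_cond_exp[OF Y _ _ Y2 convex_power2 q, of 0 0] by auto
  then show "integrable M (\<lambda>x. (real_cond_exp M F Y x)\<^sup>2)" .
  have "(\<integral> x. (real_cond_exp M F Y x)\<^sup>2 \<partial>M) \<le> (\<integral> x. real_cond_exp M F (\<lambda>x. (Y x)\<^sup>2) x \<partial>M)"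
  proof (rule integral_mono_AE[OF int real_cond_exp_int(1)[OF Y2]])
    show "AE x in M. (real_cond_exp M F Y x)\<^sup>2 \<le> real_cond_exp M F (\<lambda>x. (Y x)\<^sup>2) x"
      by (rule real_cond_exp_jensens_inequality(2)[OF Y _ _ Y2 convex_power2 q, of 0 0]) auto
  qed
  also have "\<dots> = (\<integral> x. (Y x)\<^sup>2 \<partial>M)"
    by (rule real_cond_exp_int(2)[OF Y2])
  finally show "(\<integral> x. (real_cond_exp M F Y x)\<^sup>2 \<partial>M) \<le> (\<integral> x. (Y x)\<^sup>2 \<partial>M)" .
  have bound: "AE x in M. norm (real_cond_exp M F Y x * Y x) \<le> norm (((real_cond_exp M F Y x)\<^sup>2 + (Y x)\<^sup>2) / 2)"
  proof (rule AE_I2)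
    fix x
    show "norm (real_cond_exp M F Y x * Y x) \<le> norm (((real_cond_exp M F Y x)\<^sup>2 + (Y x)\<^sup>2) / 2)"
      using mult_le_weighted_sum_squares[of 1 "\<bar>real_cond_exp M F Y x\<bar>" "\<bar>Y x\<bar>"] by (simp add: abs_mult)
  qed
  have "integrable M (\<lambda>x. real_cond_exp M F Y x * Y x)"
    by (rule Bochner_Integration.integrable_bound[OF _ _ bound]) (use int Y2 Y in simp_all)
  then have "(\<integral> x. real_cond_exp M F Y x * real_cond_exp M F Y x \<partial>M) = (\<integral> x. real_cond_exp M F Y x * Y x \<partial>M)"
    by (rule real_cond_exp_intg(2)) (use Y in auto)
  then show "(\<integral> x. (real_cond_exp M F Y x)\<^sup>2 \<partial>M) = (\<integral> x. real_cond_exp M F Y x * Y x \<partial>M)"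
    by (simp add: power2_eq_square)
qed

lemma (in sigma_finite_subalgebra) integral_real_cond_exp_add_square_le:
  assumes Y1: "integrable M Y1" "integrable M (\<lambda>x. (Y1 x)\<^sup>2)"
    and Y2: "integrable M Y2" "integrable M (\<lambda>x. (Y2 x)\<^sup>2)"
  shows "(\<integral> x. (real_cond_exp M F (\<lambda>x. Y1 x + Y2 x) x)\<^sup>2 \<partial>M)
    \<le> 2 * (\<integral> x. (real_cond_exp M F Y1 x)\<^sup>2 \<partial>M) + 2 * (\<integral> x. (Y2 x)\<^sup>2 \<partial>M)"
proof -
  let ?Z1 = "real_cond_exp M F Y1" and ?Z2 = "real_cond_exp M F Y2"
  have sq: "(u + w)\<^sup>2 \<le> 2 * u\<^sup>2 + 2 * w\<^sup>2" for u w :: real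
    using zero_le_power2[of "u - w"] by (simp add: power2_eq_square algebra_simps)
  have "(\<integral> x. (real_cond_exp M F (\<lambda>x. Y1 x + Y2 x) x)\<^sup>2 \<partial>M) \<le> (\<integral> x. 2 * (?Z1 x)\<^sup>2 + 2 * (?Z2 x)\<^sup>2 \<partial>M)"
  proof (rule integral_mono_AE)
    have "integrable M (\<lambda>x. (Y1 x + Y2 x)\<^sup>2)"
    proof (rule Bochner_Integration.integrable_bound)
      show "integrable M (\<lambda>x. 2 * (Y1 x)\<^sup>2 + 2 * (Y2 x)\<^sup>2)"
        using Y1 Y2 by simp
      show "AE x in M. norm ((Y1 x + Y2 x)\<^sup>2) \<le> norm (2 * (Y1 x)\<^sup>2 + 2 * (Y2 x)\<^sup>2)"
        using sq by (intro AE_I2) simp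
    qed (use Y1 Y2 in simp)
    then show "integrable M (\<lambda>x. (real_cond_exp M F (\<lambda>x. Y1 x + Y2 x) x)\<^sup>2)"
      using Y1 Y2 by (intro real_cond_exp_square(1)) auto
    show "integrable M (\<lambda>x. 2 * (?Z1 x)\<^sup>2 + 2 * (?Z2 x)\<^sup>2)"
      using real_cond_exp_square(1)[OF Y1] real_cond_exp_square(1)[OF Y2] by simp
    show "AE x in M. (real_cond_exp M F (\<lambda>x. Y1 x + Y2 x) x)\<^sup>2 \<le> 2 * (?Z1 x)\<^sup>2 + 2 * (?Z2 x)\<^sup>2"
      using real_cond_exp_add[OF Y1(1) Y2(1)] by eventually_elim (simp add: sq)
  qed
  also have "\<dots> \<le> 2 * (\<integral> x. (?Z1 x)\<^sup>2 \<partial>M) + 2 * (\<integral> x. (Y2 x)\<^sup>2 \<partial>M)"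
    using real_cond_exp_square[OF Y1] real_cond_exp_square[OF Y2] by simp
  finally show ?thesis .
qed

section \<open>The localized covariance estimate\<close>

lemma integrable_of_nn_integral_scaled_le:
  fixes f :: "'a \<Rightarrow> real"
  assumes [measurable]: "f \<in> borel_measurable M" and f: "\<And>x. 0 \<le> f x"
    and p: "0 < p" and E: "0 \<le> E" and le: "ennreal p * (\<integral>\<^sup>+ x. ennreal (f x) \<partial>M) \<le> ennreal E"
  shows "integrable M f" and "(\<integral> x. f x \<partial>M) \<le> E / p"
proof -
  have "(\<integral>\<^sup>+ x. ennreal (f x) \<partial>M) = ennreal (1 / p) * (ennreal p * (\<integral>\<^sup>+ x. ennreal (f x) \<partial>M))"
    using p by (simp add: mult.assoc[symmetric] ennreal_mult[symmetric])
  also have "\<dots> \<le> ennreal (1 / p) * ennreal E"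
    by (intro mult_left_mono le) simp
  also have "\<dots> = ennreal (E / p)"
    using p E by (simp add: ennreal_mult[symmetric])
  finally have f_le: "(\<integral>\<^sup>+ x. ennreal (f x) \<partial>M) \<le> ennreal (E / p)" .
  then show int: "integrable M f"
    using f by (intro integrableI_nonneg) (auto simp: top_unique less_top[symmetric] intro: le_less_trans)
  have "ennreal (\<integral> x. f x \<partial>M) \<le> ennreal (E / p)"
    using f_le nn_integral_eq_integral[OF int] f by simp
  then show "(\<integral> x. f x \<partial>M) \<le> E / p"
    using p E by (simp add: ennreal_le_iff)
qed

lemma std_gauss_weighted_square_le:
  fixes M :: "'a measure" and X N :: "'a \<Rightarrow> real ^ 'n" and g :: "real ^ 'n \<Rightarrow> real"
  assumes M: "prob_space M"
    and [measurable]: "X \<in> borel_measurable M" "N \<in> borel_measurable M" "g \<in> borel_measurable borel"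
    and N_law: "distr M borel N = std_gauss" and indep: "prob_space.indep_var M borel X borel N"
    and a: "0 \<le> a" and s: "0 < s"
    and g2: "integrable M (\<lambda>\<omega>. (g (a *\<^sub>R X \<omega> + s *\<^sub>R N \<omega>))\<^sup>2)"
    and p: "0 < measure M {\<omega>\<in>space M. norm (X \<omega>) \<le> R}"
  shows "integrable std_gauss (\<lambda>y. exp (- shift_bound (a * R / s) y) * (g (s *\<^sub>R y))\<^sup>2)"
    and "(\<integral> y. exp (- shift_bound (a * R / s) y) * (g (s *\<^sub>R y))\<^sup>2 \<partial>std_gauss)
      \<le> (\<integral> \<omega>. (g (a *\<^sub>R X \<omega> + s *\<^sub>R N \<omega>))\<^sup>2 \<partial>M) / measure M {\<omega>\<in>space M. norm (X \<omega>) \<le> R}"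
proof -
  interpret M: prob_space M by (rule M)
  let ?Q = "\<lambda>y. exp (- shift_bound (a * R / s) y) * (g (s *\<^sub>R y))\<^sup>2"
  let ?\<mu> = "distr M borel X"
  define p where "p = measure M {\<omega>\<in>space M. norm (X \<omega>) \<le> R}"
  define E where "E = (\<integral> \<omega>. (g (a *\<^sub>R X \<omega> + s *\<^sub>R N \<omega>))\<^sup>2 \<partial>M)"
  have inner: "ennreal (indicator (cball 0 R) x) * (\<integral>\<^sup>+ y. ennreal (?Q y) \<partial>std_gauss)
      \<le> (\<integral>\<^sup>+ y. ennreal ((g (a *\<^sub>R x + s *\<^sub>R y))\<^sup>2) \<partial>std_gauss)" for x :: "real ^ 'n"
  proof (cases "norm x \<le> R")
    case True
    have "norm ((a / s) *\<^sub>R x) \<le> a * R / s"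
      using True a s by (simp add: mult_left_mono divide_right_mono)
    from nn_integral_std_gauss_translate_square_ge[OF _ this, of "\<lambda>y. g (s *\<^sub>R y)"]
    show ?thesis
      using True s by (simp add: algebra_simps)
  qed simp
  have "ennreal p * (\<integral>\<^sup>+ y. ennreal (?Q y) \<partial>std_gauss)
      = (\<integral>\<^sup>+ x. ennreal (indicator (cball 0 R) x) * (\<integral>\<^sup>+ y. ennreal (?Q y) \<partial>std_gauss) \<partial>?\<mu>)"
  proof -
    have "X -` cball 0 R \<inter> space M = {\<omega>\<in>space M. norm (X \<omega>) \<le> R}"
      by auto
    then have "emeasure ?\<mu> (cball 0 R) = ennreal p"
      by (subst emeasure_distr) (auto simp: p_def M.emeasure_eq_measure)
    then show ?thesis
      by (subst nn_integral_multc) (auto simp: ennreal_indicator intro: borel_measurable_indicator)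
  qed
  also have "\<dots> \<le> (\<integral>\<^sup>+ x. \<integral>\<^sup>+ y. ennreal ((g (a *\<^sub>R x + s *\<^sub>R y))\<^sup>2) \<partial>std_gauss \<partial>?\<mu>)"
    by (intro nn_integral_mono inner)
  also have "\<dots> = (\<integral>\<^sup>+ \<omega>. ennreal ((g (a *\<^sub>R X \<omega> + s *\<^sub>R N \<omega>))\<^sup>2) \<partial>M)"
    using M.nn_integral_indep_var[OF indep, of "\<lambda>x y. ennreal ((g (a *\<^sub>R x + s *\<^sub>R y))\<^sup>2)"]
    by (simp add: N_law)
  also have "\<dots> = ennreal E"
    unfolding E_def by (rule nn_integral_eq_integral[OF g2]) simp
  finally have "ennreal p * (\<integral>\<^sup>+ y. ennreal (?Q y) \<partial>std_gauss) \<le> ennreal E" .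
  moreover have "0 < p" "0 \<le> E"
    using p by (simp_all add: p_def E_def)
  ultimately show "integrable std_gauss ?Q" and "(\<integral> y. ?Q y \<partial>std_gauss) \<le> E / p"
    using integrable_of_nn_integral_scaled_le[of ?Q std_gauss p E] by simp_all
qed

lemma integral_indep_centered_mult:
  fixes M :: "'a measure" and X N :: "'a \<Rightarrow> real ^ 'n" and \<psi> g :: "real ^ 'n \<Rightarrow> real" and a s :: real
  defines "I \<equiv> \<lambda>x. \<integral> y. g (a *\<^sub>R x + s *\<^sub>R y) \<partial>distr M borel N"
  assumes M: "prob_space M"
    and X [measurable]: "X \<in> borel_measurable M" and N [measurable]: "N \<in> borel_measurable M"
    and [measurable]: "\<psi> \<in> borel_measurable borel" "g \<in> borel_measurable borel"
    and indep: "prob_space.indep_var M borel X borel N"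
    and \<psi>_bound: "\<And>x. \<bar>\<psi> x\<bar> \<le> K" and \<psi>_mean: "(\<integral> \<omega>. \<psi> (X \<omega>) \<partial>M) = 0"
    and int: "integrable M (\<lambda>\<omega>. \<psi> (X \<omega>) * g (a *\<^sub>R X \<omega> + s *\<^sub>R N \<omega>))"
  shows "integrable (distr M borel X) (\<lambda>x. \<psi> x * (I x - I 0))"
    and "(\<integral> \<omega>. \<psi> (X \<omega>) * g (a *\<^sub>R X \<omega> + s *\<^sub>R N \<omega>) \<partial>M) = (\<integral> x. \<psi> x * (I x - I 0) \<partial>distr M borel X)"
proof -
  interpret M: prob_space M by (rule M)
  interpret \<mu>: prob_space "distr M borel X"
    by (rule M.prob_space_distr) simp
  note fubini = M.integral_indep_var[OF indep, of "\<lambda>x y. \<psi> x * g (a *\<^sub>R x + s *\<^sub>R y)", OF _ int,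
      simplified, folded I_def]
  have int_\<psi>: "integrable (distr M borel X) \<psi>"
    by (rule \<mu>.integrable_bounded(1)) (use \<psi>_bound in auto)
  then show "integrable (distr M borel X) (\<lambda>x. \<psi> x * (I x - I 0))"
    using fubini(1) by (simp add: I_def right_diff_distrib)
  have "(\<integral> x. \<psi> x \<partial>distr M borel X) = 0"
    using \<psi>_mean by (simp add: integral_distr)
  then show "(\<integral> \<omega>. \<psi> (X \<omega>) * g (a *\<^sub>R X \<omega> + s *\<^sub>R N \<omega>) \<partial>M) = (\<integral> x. \<psi> x * (I x - I 0) \<partial>distr M borel X)"
    using fubini int_\<psi> by (simp add: I_def right_diff_distrib mult.commute)
qed

lemma abs_integral_localized_mult_le:
  fixes M :: "'a measure" and X N :: "'a \<Rightarrow> real ^ 'n" and \<psi> g :: "real ^ 'n \<Rightarrow> real"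
  assumes M: "prob_space M"
    and X [measurable]: "X \<in> borel_measurable M" and N [measurable]: "N \<in> borel_measurable M"
    and \<psi> [measurable]: "\<psi> \<in> borel_measurable borel" and g [measurable]: "g \<in> borel_measurable borel"
    and N_law: "distr M borel N = std_gauss" and indep: "prob_space.indep_var M borel X borel N"
    and a: "0 \<le> a" and s: "0 < s" and R: "0 \<le> R" and b1: "a * R / s \<le> 1"
    and \<psi>_bound: "\<And>x. \<bar>\<psi> x\<bar> \<le> K" and \<psi>_support: "\<And>x. R < norm x \<Longrightarrow> \<psi> x = 0"
    and \<psi>_mean: "(\<integral> \<omega>. \<psi> (X \<omega>) \<partial>M) = 0"
    and g2: "integrable M (\<lambda>\<omega>. (g (a *\<^sub>R X \<omega> + s *\<^sub>R N \<omega>))\<^sup>2)"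
    and p: "0 < measure M {\<omega>\<in>space M. norm (X \<omega>) \<le> R}" and c: "0 < c"
  shows "\<bar>\<integral> \<omega>. \<psi> (X \<omega>) * g (a *\<^sub>R X \<omega> + s *\<^sub>R N \<omega>) \<partial>M\<bar>
    \<le> K * (c * ((\<integral> \<omega>. (g (a *\<^sub>R X \<omega> + s *\<^sub>R N \<omega>))\<^sup>2 \<partial>M) / measure M {\<omega>\<in>space M. norm (X \<omega>) \<le> R})
        + (\<integral> y. shift_defect (a * R / s) y \<partial>(std_gauss :: (real ^ 'n) measure)) / c) / 2"
    (is "_ \<le> K * ?S / 2")
proof -
  interpret M: prob_space M by (rule M)
  interpret \<mu>: prob_space "distr M borel X"
    by (rule M.prob_space_distr) simp
  let ?b = "a * R / s"
  define I where "I x = (\<integral> y. g (a *\<^sub>R x + s *\<^sub>R y) \<partial>std_gauss)" for x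
  have gauss: "prob_space (std_gauss :: (real ^ 'n) measure)"
    using M.prob_space_distr[OF N] N_law by simp
  have b: "0 \<le> ?b" "?b \<le> 1"
    using a s R b1 by simp_all
  have K: "0 \<le> K"
    using \<psi>_bound[of 0] by simp
  note weighted = std_gauss_weighted_square_le[OF M X N g N_law indep a s g2 p]
  have "integrable M (\<lambda>\<omega>. \<psi> (X \<omega>) * g (a *\<^sub>R X \<omega> + s *\<^sub>R N \<omega>))"
    using M.square_integrable_imp_integrable[OF _ g2] \<psi>_bound K
    by (rule_tac Bochner_Integration.integrable_bound[where f="\<lambda>\<omega>. K * g (a *\<^sub>R X \<omega> + s *\<^sub>R N \<omega>)"])
      (auto intro!: AE_I2 simp: abs_mult mult_right_mono)
  note centered = integral_indep_centered_mult[OF M X N \<psi> g indep \<psi>_bound \<psi>_mean this, unfolded N_law, folded I_def]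
  have "?S / 2 \<ge> (c * (\<integral> y. exp (- shift_bound ?b y) * (g (s *\<^sub>R y))\<^sup>2 \<partial>std_gauss)
      + (\<integral> y. shift_defect ?b y \<partial>(std_gauss :: (real ^ 'n) measure)) / c) / 2" (is "_ \<ge> ?D")
    using c by (intro divide_right_mono add_right_mono mult_left_mono weighted(2)) auto
  have "\<bar>\<psi> x * (I x - I 0)\<bar> \<le> K * (?S / 2)" for x
  proof (cases "norm x \<le> R")
    case True
    have "norm ((a / s) *\<^sub>R x) \<le> ?b"
      using True a s by (simp add: mult_left_mono divide_right_mono)
    from integral_std_gauss_translate_diff_le[OF gauss _ this b c weighted(1)]
    have "\<bar>I x - I 0\<bar> \<le> ?D"
      using s by (simp add: I_def algebra_simps)
    then have "\<bar>I x - I 0\<bar> \<le> ?S / 2"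
      using \<open>?S / 2 \<ge> ?D\<close> by linarith
    from mult_mono[OF \<psi>_bound[of x] this K abs_ge_zero] show ?thesis
      by (simp add: abs_mult)
  next
    case False
    have "0 \<le> ?D"
      using c weighted(1) integrable_shift_defect[OF gauss b] by (simp add: integral_nonneg_AE shift_defect_nonneg)
    then have "0 \<le> ?S / 2"
      using \<open>?S / 2 \<ge> ?D\<close> by linarith
    then show ?thesis
      using \<psi>_support[of x] False K by simp
  qed
  then have "\<bar>\<integral> x. \<psi> x * (I x - I 0) \<partial>distr M borel X\<bar> \<le> (\<integral> x. K * (?S / 2) \<partial>distr M borel X)"
    using centered(1) by (intro integral_abs_bound_integral) auto
  then show ?thesis
    using centered(2) \<mu>.prob_space by simp
qed

lemma integral_cond_exp_localized_square_le:
  fixes M :: "'a measure" and X N :: "'a \<Rightarrow> real ^ 'n" and \<psi> :: "real ^ 'n \<Rightarrow> real" and a s :: real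
  defines "F \<equiv> vimage_algebra (space M) (\<lambda>\<omega>. a *\<^sub>R X \<omega> + s *\<^sub>R N \<omega>) borel"
  assumes M: "prob_space M"
    and X [measurable]: "X \<in> borel_measurable M" and N [measurable]: "N \<in> borel_measurable M"
    and \<psi> [measurable]: "\<psi> \<in> borel_measurable borel"
    and N_law: "distr M borel N = std_gauss" and indep: "prob_space.indep_var M borel X borel N"
    and a: "0 \<le> a" and s: "0 < s" and R: "0 \<le> R" and b1: "a * R / s \<le> 1"
    and K: "0 < K" and \<psi>_bound: "\<And>x. \<bar>\<psi> x\<bar> \<le> K" and \<psi>_support: "\<And>x. R < norm x \<Longrightarrow> \<psi> x = 0"
    and \<psi>_mean: "(\<integral> \<omega>. \<psi> (X \<omega>) \<partial>M) = 0"
    and p: "0 < measure M {\<omega>\<in>space M. norm (X \<omega>) \<le> R}"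
  shows "(\<integral> \<omega>. (real_cond_exp M F (\<lambda>\<omega>. \<psi> (X \<omega>)) \<omega>)\<^sup>2 \<partial>M)
    \<le> K\<^sup>2 * (\<integral> y. shift_defect (a * R / s) y \<partial>(std_gauss :: (real ^ 'n) measure))
      / measure M {\<omega>\<in>space M. norm (X \<omega>) \<le> R}"
proof -
  interpret M: prob_space M by (rule M)
  define T where "T \<omega> = a *\<^sub>R X \<omega> + s *\<^sub>R N \<omega>" for \<omega>
  define Z where "Z = real_cond_exp M F (\<lambda>\<omega>. \<psi> (X \<omega>))"
  define p where "p = measure M {\<omega>\<in>space M. norm (X \<omega>) \<le> R}"
  define J where "J = (\<integral> y. shift_defect (a * R / s) y \<partial>(std_gauss :: (real ^ 'n) measure))"
  define E where "E = (\<integral> \<omega>. (Z \<omega>)\<^sup>2 \<partial>M)"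
  interpret F: sigma_finite_subalgebra M F
    unfolding F_def by (rule sigma_finite_subalgebra_vimage_algebra[OF M]) simp
  have Y: "integrable M (\<lambda>\<omega>. \<psi> (X \<omega>))" "integrable M (\<lambda>\<omega>. (\<psi> (X \<omega>))\<^sup>2)"
    using \<psi>_bound by (simp_all add: M.integrable_bounded[where K=K])
  obtain g where g [measurable]: "g \<in> borel_measurable borel" and Zg: "\<And>\<omega>. \<omega> \<in> space M \<Longrightarrow> Z \<omega> = g (T \<omega>)"
    using vimage_algebra_measurable_factor[of T "space M" borel Z]
    unfolding Z_def F_def T_def[abs_def] by auto
  have g2: "integrable M (\<lambda>\<omega>. (g (a *\<^sub>R X \<omega> + s *\<^sub>R N \<omega>))\<^sup>2)"
    using F.real_cond_exp_square(1)[OF Y] Zg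
    by (subst Bochner_Integration.integrable_cong[OF refl]) (auto simp: Z_def T_def)
  have "E = (\<integral> \<omega>. Z \<omega> * \<psi> (X \<omega>) \<partial>M)"
    unfolding E_def Z_def by (rule F.real_cond_exp_square(3)[OF Y])
  also have "\<dots> = (\<integral> \<omega>. \<psi> (X \<omega>) * g (a *\<^sub>R X \<omega> + s *\<^sub>R N \<omega>) \<partial>M)"
    by (intro Bochner_Integration.integral_cong) (auto simp: Zg T_def)
  also have "\<dots> \<le> \<bar>\<dots>\<bar>"
    by simp
  also have "\<dots> \<le> K * ((p / K) * (E / p) + J / (p / K)) / 2"
  proof -
    have "(\<integral> \<omega>. (g (a *\<^sub>R X \<omega> + s *\<^sub>R N \<omega>))\<^sup>2 \<partial>M) = E"
      unfolding E_def by (intro Bochner_Integration.integral_cong) (auto simp: Zg T_def)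
    then show ?thesis
      using abs_integral_localized_mult_le[OF M X N \<psi> g N_law indep a s R b1 \<psi>_bound \<psi>_support \<psi>_mean g2 p,
          of "p / K"] p K
      by (simp add: p_def J_def)
  qed
  also have "\<dots> = (E + K\<^sup>2 * J / p) / 2" \<comment> \<open>\<open>c = p / K\<close> leaves \<open>E / 2\<close>, which is absorbed\<close>
    using p K by (simp add: p_def field_simps power2_eq_square)
  finally show ?thesis
    by (simp add: E_def Z_def p_def J_def)
qed

section \<open>Truncation and the large-time limit\<close>

definition tail_second_moment :: "'a measure \<Rightarrow> ('a \<Rightarrow> 'b::real_normed_vector) \<Rightarrow> real \<Rightarrow> real" where
  "tail_second_moment M X R = (\<integral> \<omega>. (norm (X \<omega>))\<^sup>2 * indicator {x. R < norm x} (X \<omega>) \<partial>M)"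

lemma indicator_cball_add_indicator_outside:
  "indicator (cball 0 R) x + indicator {x. R < norm x} x = (1 :: real)"
  by (simp add: indicator_def)

lemma tail_second_moment_nonneg: "0 \<le> tail_second_moment M X R"
  unfolding tail_second_moment_def by (intro integral_nonneg_AE) (simp add: indicator_def)

lemma (in finite_measure) integrable_dominated_by_norm:
  fixes X :: "'a \<Rightarrow> 'b::real_normed_vector" and Y :: "'a \<Rightarrow> real"
  assumes [measurable]: "Y \<in> borel_measurable M" "X \<in> borel_measurable M"
    and Y_le: "\<And>\<omega>. \<bar>Y \<omega>\<bar> \<le> norm (X \<omega>)" and X2: "integrable M (\<lambda>\<omega>. (norm (X \<omega>))\<^sup>2)"
  shows "integrable M (\<lambda>\<omega>. (Y \<omega>)\<^sup>2)" and "integrable M Y"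
proof -
  show Y2: "integrable M (\<lambda>\<omega>. (Y \<omega>)\<^sup>2)"
    using Y_le abs_le_square_iff[of "Y \<omega>" "norm (X \<omega>)" for \<omega>]
    by (rule_tac Bochner_Integration.integrable_bound[OF X2]) (auto intro!: AE_I2)
  show "integrable M Y"
    by (rule square_integrable_imp_integrable[OF _ Y2]) simp
qed

lemma truncated_mean_bounds:
  fixes M :: "'a measure" and X :: "'a \<Rightarrow> 'b::euclidean_space" and Y :: "'a \<Rightarrow> real" and R :: real
  defines "p \<equiv> measure M {\<omega>\<in>space M. norm (X \<omega>) \<le> R}"
  defines "c \<equiv> (\<integral> \<omega>. Y \<omega> * indicator (cball 0 R) (X \<omega>) \<partial>M) / p"
  assumes M: "prob_space M" and [measurable]: "X \<in> borel_measurable M" "Y \<in> borel_measurable M"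
    and Y_le: "\<And>\<omega>. \<bar>Y \<omega>\<bar> \<le> norm (X \<omega>)" and X2: "integrable M (\<lambda>\<omega>. (norm (X \<omega>))\<^sup>2)"
    and Y_mean: "(\<integral> \<omega>. Y \<omega> \<partial>M) = 0" and R: "0 < R" and p: "0 < p"
  shows "(\<integral> \<omega>. (Y \<omega> - c) * indicator (cball 0 R) (X \<omega>) \<partial>M) = 0"
    and "\<bar>c\<bar> \<le> R" and "\<bar>c\<bar> \<le> tail_second_moment M X R / (R * p)"
proof -
  interpret M: prob_space M by (rule M)
  let ?B = "indicator (cball 0 R) :: 'b \<Rightarrow> real" and ?C = "indicator {x. R < norm x} :: 'b \<Rightarrow> real"
  have int_Y: "integrable M Y"
    by (rule M.integrable_dominated_by_norm(2)[OF _ _ Y_le X2]) simp_all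
  have int_YB: "integrable M (\<lambda>\<omega>. Y \<omega> * ?B (X \<omega>))" and int_YC: "integrable M (\<lambda>\<omega>. Y \<omega> * ?C (X \<omega>))"
    by (rule Bochner_Integration.integrable_bound[OF int_Y]; force simp: indicator_def intro!: AE_I2)+
  have int_B: "integrable M (\<lambda>\<omega>. ?B (X \<omega>))"
    by (rule M.integrable_bounded(1)[of _ 1]) (auto simp: indicator_def)
  have pB: "(\<integral> \<omega>. ?B (X \<omega>) \<partial>M) = p"
  proof -
    have "(\<integral> \<omega>. ?B (X \<omega>) \<partial>M) = (\<integral> \<omega>. indicator {\<omega>\<in>space M. norm (X \<omega>) \<le> R} \<omega> \<partial>M)"
      by (intro Bochner_Integration.integral_cong) (auto simp: indicator_def)
    then show ?thesis
      by (simp add: p_def)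
  qed
  show "(\<integral> \<omega>. (Y \<omega> - c) * ?B (X \<omega>) \<partial>M) = 0"
    using int_YB int_B pB p by (simp add: left_diff_distrib c_def)
  have "c * p = (\<integral> \<omega>. Y \<omega> * ?B (X \<omega>) \<partial>M)"
    using p by (simp add: c_def)
  also have "\<bar>\<dots>\<bar> \<le> (\<integral> \<omega>. \<bar>Y \<omega> * ?B (X \<omega>)\<bar> \<partial>M)"
    by (rule integral_abs_bound)
  also have "\<dots> \<le> (\<integral> \<omega>. R * ?B (X \<omega>) \<partial>M)"
    using int_YB int_B by (intro integral_mono) (auto simp: indicator_def intro: order_trans[OF Y_le])
  finally show "\<bar>c\<bar> \<le> R"
    using p pB by (simp add: abs_mult)
  have "c * p = - (\<integral> \<omega>. Y \<omega> * ?C (X \<omega>) \<partial>M)"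
  proof -
    have "(\<integral> \<omega>. Y \<omega> \<partial>M) = (\<integral> \<omega>. Y \<omega> * ?B (X \<omega>) + Y \<omega> * ?C (X \<omega>) \<partial>M)"
      by (simp add: distrib_left[symmetric] indicator_cball_add_indicator_outside)
    then show ?thesis
      using p int_YB int_YC Y_mean by (simp add: c_def)
  qed
  also have "\<bar>\<dots>\<bar> \<le> (\<integral> \<omega>. \<bar>Y \<omega> * ?C (X \<omega>)\<bar> \<partial>M)"
    by (simp add: integral_abs_bound)
  also have "\<dots> \<le> (\<integral> \<omega>. (norm (X \<omega>))\<^sup>2 * ?C (X \<omega>) / R \<partial>M)"
  proof (rule integral_mono)
    have "integrable M (\<lambda>\<omega>. (norm (X \<omega>))\<^sup>2 * ?C (X \<omega>))"
      by (rule Bochner_Integration.integrable_bound[OF X2]) (auto intro!: AE_I2 simp: indicator_def)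
    then show "integrable M (\<lambda>\<omega>. \<bar>Y \<omega> * ?C (X \<omega>)\<bar>)" "integrable M (\<lambda>\<omega>. (norm (X \<omega>))\<^sup>2 * ?C (X \<omega>) / R)"
      using int_YC by simp_all
    have "R * \<bar>Y \<omega>\<bar> \<le> norm (X \<omega>) * norm (X \<omega>)" if "R < norm (X \<omega>)" for \<omega>
      using mult_left_mono[OF Y_le[of \<omega>], of R] mult_right_mono[of R "norm (X \<omega>)" "norm (X \<omega>)"] that R
      by linarith
    then show "\<bar>Y \<omega> * ?C (X \<omega>)\<bar> \<le> (norm (X \<omega>))\<^sup>2 * ?C (X \<omega>) / R" for \<omega>
      using R by (simp add: indicator_def field_simps power2_eq_square)
  qed
  finally show "\<bar>c\<bar> \<le> tail_second_moment M X R / (R * p)"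
    using p R by (simp add: tail_second_moment_def abs_mult field_simps)
qed

lemma truncation_remainder_square:
  fixes M :: "'a measure" and X :: "'a \<Rightarrow> 'b::euclidean_space" and Y :: "'a \<Rightarrow> real"
  assumes M: "prob_space M" and [measurable]: "X \<in> borel_measurable M" "Y \<in> borel_measurable M"
    and Y_le: "\<And>\<omega>. \<bar>Y \<omega>\<bar> \<le> norm (X \<omega>)" and X2: "integrable M (\<lambda>\<omega>. (norm (X \<omega>))\<^sup>2)"
  shows "integrable M (\<lambda>\<omega>. (Y \<omega> * indicator {x. R < norm x} (X \<omega>) + c * indicator (cball 0 R) (X \<omega>))\<^sup>2)"
    and "(\<integral> \<omega>. (Y \<omega> * indicator {x. R < norm x} (X \<omega>) + c * indicator (cball 0 R) (X \<omega>))\<^sup>2 \<partial>M)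
      \<le> tail_second_moment M X R + c\<^sup>2"
proof -
  interpret M: prob_space M by (rule M)
  let ?B = "indicator (cball 0 R) :: 'b \<Rightarrow> real" and ?C = "indicator {x. R < norm x} :: 'b \<Rightarrow> real"
  have pointwise: "(Y \<omega> * ?C (X \<omega>) + c * ?B (X \<omega>))\<^sup>2 \<le> (norm (X \<omega>))\<^sup>2 * ?C (X \<omega>) + c\<^sup>2" for \<omega>
  proof (cases "R < norm (X \<omega>)")
    case True
    have "(Y \<omega>)\<^sup>2 \<le> (norm (X \<omega>))\<^sup>2"
      using power_mono[OF Y_le[of \<omega>] abs_ge_zero, of 2] by simp
    then show ?thesis
      using True by (simp add: indicator_def add_increasing2)
  qed (simp add: indicator_def)
  have int_XC: "integrable M (\<lambda>\<omega>. (norm (X \<omega>))\<^sup>2 * ?C (X \<omega>))"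
    by (rule Bochner_Integration.integrable_bound[OF X2]) (auto intro!: AE_I2 simp: indicator_def)
  then have int_bound: "integrable M (\<lambda>\<omega>. (norm (X \<omega>))\<^sup>2 * ?C (X \<omega>) + c\<^sup>2)"
    by simp
  then show int_sq: "integrable M (\<lambda>\<omega>. (Y \<omega> * ?C (X \<omega>) + c * ?B (X \<omega>))\<^sup>2)"
    by (rule Bochner_Integration.integrable_bound)
      (measurable, use pointwise in \<open>auto intro!: AE_I2 order_trans[OF _ abs_ge_self]\<close>)
  have "(\<integral> \<omega>. (Y \<omega> * ?C (X \<omega>) + c * ?B (X \<omega>))\<^sup>2 \<partial>M) \<le> (\<integral> \<omega>. (norm (X \<omega>))\<^sup>2 * ?C (X \<omega>) + c\<^sup>2 \<partial>M)"
    using int_sq int_bound pointwise by (rule integral_mono)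
  then show "(\<integral> \<omega>. (Y \<omega> * ?C (X \<omega>) + c * ?B (X \<omega>))\<^sup>2 \<partial>M) \<le> tail_second_moment M X R + c\<^sup>2"
    using int_XC M.prob_space by (simp add: tail_second_moment_def)
qed

lemma integral_cond_exp_direction_square_le:
  fixes M :: "'a measure" and X N :: "'a \<Rightarrow> real ^ 'n" and \<alpha> :: "real ^ 'n" and a s R :: real
  defines "F \<equiv> vimage_algebra (space M) (\<lambda>\<omega>. a *\<^sub>R X \<omega> + s *\<^sub>R N \<omega>) borel"
  defines "p \<equiv> measure M {\<omega>\<in>space M. norm (X \<omega>) \<le> R}"
  assumes M: "prob_space M"
    and X [measurable]: "X \<in> borel_measurable M" and N [measurable]: "N \<in> borel_measurable M"
    and N_law: "distr M borel N = std_gauss" and indep: "prob_space.indep_var M borel X borel N"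
    and X2: "integrable M (\<lambda>\<omega>. (norm (X \<omega>))\<^sup>2)" and mean: "(\<integral> \<omega>. X \<omega> \<partial>M) = 0"
    and \<alpha>: "norm \<alpha> = 1" and a: "0 \<le> a" and s: "0 < s" and R: "1 \<le> R" and b1: "a * R / s \<le> 1"
    and p: "0 < p"
  shows "integrable M (\<lambda>\<omega>. (real_cond_exp M F (\<lambda>\<omega>. \<alpha> \<bullet> X \<omega>) \<omega>)\<^sup>2)"
    and "(\<integral> \<omega>. (real_cond_exp M F (\<lambda>\<omega>. \<alpha> \<bullet> X \<omega>) \<omega>)\<^sup>2 \<partial>M)
      \<le> 8 * R\<^sup>2 * (\<integral> y. shift_defect (a * R / s) y \<partial>(std_gauss :: (real ^ 'n) measure)) / p
        + 2 * tail_second_moment M X R + 2 * (tail_second_moment M X R / (R * p))\<^sup>2"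
proof -
  interpret M: prob_space M by (rule M)
  interpret F: sigma_finite_subalgebra M F
    unfolding F_def by (rule sigma_finite_subalgebra_vimage_algebra[OF M]) simp
  let ?B = "indicator (cball 0 R) :: real ^ 'n \<Rightarrow> real" and ?C = "indicator {x. R < norm x} :: real ^ 'n \<Rightarrow> real"
  define c where "c = (\<integral> \<omega>. (\<alpha> \<bullet> X \<omega>) * ?B (X \<omega>) \<partial>M) / p"
  define \<psi> where "\<psi> x = (\<alpha> \<bullet> x - c) * ?B x" for x
  have [measurable]: "\<psi> \<in> borel_measurable borel"
    unfolding \<psi>_def by (intro borel_measurable_times borel_measurable_indicator) auto
  have \<alpha>X: "\<bar>\<alpha> \<bullet> x\<bar> \<le> norm x" for x
    using Cauchy_Schwarz_ineq2[of \<alpha> x] \<alpha> by simp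
  have int_X: "integrable M X"
    using M.square_integrable_imp_integrable[OF _ X2] by (simp add: integrable_norm_iff)
  then have \<alpha>X_mean: "(\<integral> \<omega>. \<alpha> \<bullet> X \<omega> \<partial>M) = 0"
    using mean by simp
  have R0: "0 < R"
    using R by simp
  have "(\<lambda>\<omega>. \<alpha> \<bullet> X \<omega>) \<in> borel_measurable M"
    by simp
  note trunc = truncated_mean_bounds[OF M X this \<alpha>X X2 \<alpha>X_mean R0 p[unfolded p_def], folded p_def, folded c_def]
    and remainder = truncation_remainder_square[OF M X this \<alpha>X X2, of R c]
  have \<psi>_bound: "\<bar>\<psi> x\<bar> \<le> 2 * R" for x
    using \<alpha>X[of x] trunc(2) by (auto simp: \<psi>_def indicator_def)
  have \<psi>_mean: "(\<integral> \<omega>. \<psi> (X \<omega>) \<partial>M) = 0"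
    using trunc(1) by (simp add: \<psi>_def)
  let ?Y1 = "\<lambda>\<omega>. \<psi> (X \<omega>)" and ?Y2 = "\<lambda>\<omega>. (\<alpha> \<bullet> X \<omega>) * ?C (X \<omega>) + c * ?B (X \<omega>)"
  have Y: "integrable M (\<lambda>\<omega>. \<alpha> \<bullet> X \<omega>)" "integrable M (\<lambda>\<omega>. (\<alpha> \<bullet> X \<omega>)\<^sup>2)"
    by (rule M.integrable_dominated_by_norm[OF _ _ \<alpha>X X2]; simp)+
  show "integrable M (\<lambda>\<omega>. (real_cond_exp M F (\<lambda>\<omega>. \<alpha> \<bullet> X \<omega>) \<omega>)\<^sup>2)"
    by (rule F.real_cond_exp_square(1)[OF Y])
  have Y1: "integrable M ?Y1" "integrable M (\<lambda>\<omega>. (?Y1 \<omega>)\<^sup>2)"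
    using \<psi>_bound by (simp_all add: M.integrable_bounded[where K="2 * R"])
  have split: "(\<lambda>\<omega>. \<alpha> \<bullet> X \<omega>) = (\<lambda>\<omega>. ?Y1 \<omega> + ?Y2 \<omega>)"
    by (auto simp: \<psi>_def indicator_def)
  have "?Y2 = (\<lambda>\<omega>. \<alpha> \<bullet> X \<omega> - ?Y1 \<omega>)"
    by (auto simp: \<psi>_def indicator_def)
  then have Y2: "integrable M ?Y2" "integrable M (\<lambda>\<omega>. (?Y2 \<omega>)\<^sup>2)"
    using Bochner_Integration.integrable_diff[OF Y(1) Y1(1)] remainder(1) by simp_all
  have "(\<integral> \<omega>. (real_cond_exp M F (\<lambda>\<omega>. \<alpha> \<bullet> X \<omega>) \<omega>)\<^sup>2 \<partial>M)
      \<le> 2 * (\<integral> \<omega>. (real_cond_exp M F ?Y1 \<omega>)\<^sup>2 \<partial>M) + 2 * (\<integral> \<omega>. (?Y2 \<omega>)\<^sup>2 \<partial>M)"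
    unfolding split by (rule F.integral_real_cond_exp_add_square_le[OF Y1 Y2])
  also have "\<dots> \<le> 2 * ((2 * R)\<^sup>2 * (\<integral> y. shift_defect (a * R / s) y \<partial>(std_gauss :: (real ^ 'n) measure)) / p)
      + 2 * (tail_second_moment M X R + (tail_second_moment M X R / (R * p))\<^sup>2)"
  proof (intro add_mono mult_left_mono)
    show "(\<integral> \<omega>. (real_cond_exp M F ?Y1 \<omega>)\<^sup>2 \<partial>M)
        \<le> (2 * R)\<^sup>2 * (\<integral> y. shift_defect (a * R / s) y \<partial>(std_gauss :: (real ^ 'n) measure)) / p"
      unfolding F_def p_def
      by (rule integral_cond_exp_localized_square_le[OF M X N _ N_law indep a s _ b1 _ \<psi>_bound _ \<psi>_mean p[unfolded p_def]])
        (use R in \<open>auto simp: \<psi>_def indicator_def\<close>)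
    have "c\<^sup>2 \<le> (tail_second_moment M X R / (R * p))\<^sup>2"
      using power_mono[OF trunc(3) abs_ge_zero, of 2] by simp
    then show "(\<integral> \<omega>. (?Y2 \<omega>)\<^sup>2 \<partial>M) \<le> tail_second_moment M X R + (tail_second_moment M X R / (R * p))\<^sup>2"
      using remainder(2) by simp
  qed simp_all
  finally show "(\<integral> \<omega>. (real_cond_exp M F (\<lambda>\<omega>. \<alpha> \<bullet> X \<omega>) \<omega>)\<^sup>2 \<partial>M)
      \<le> 8 * R\<^sup>2 * (\<integral> y. shift_defect (a * R / s) y \<partial>(std_gauss :: (real ^ 'n) measure)) / p
        + 2 * tail_second_moment M X R + 2 * (tail_second_moment M X R / (R * p))\<^sup>2"
    by (simp add: power2_eq_square algebra_simps)
qed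

lemma tendsto_tail_second_moment:
  fixes X :: "'a \<Rightarrow> 'b::real_normed_vector"
  assumes [measurable]: "X \<in> borel_measurable M" and X2: "integrable M (\<lambda>\<omega>. (norm (X \<omega>))\<^sup>2)"
  shows "((\<lambda>R. tail_second_moment M X R) \<longlongrightarrow> 0) at_top"
proof -
  have "((\<lambda>R. tail_second_moment M X R) \<longlongrightarrow> (\<integral> \<omega>. 0 \<partial>M)) at_top"
    unfolding tail_second_moment_def
  proof (rule integral_dominated_convergence_at_top[OF _ _ X2])
    show "AE \<omega> in M. ((\<lambda>R. (norm (X \<omega>))\<^sup>2 * indicator {x. R < norm x} (X \<omega>)) \<longlongrightarrow> 0) at_top"
    proof (rule AE_I2)
      fix \<omega>
      have "eventually (\<lambda>R. (norm (X \<omega>))\<^sup>2 * indicator {x. R < norm x} (X \<omega>) = (0::real)) at_top"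
        using eventually_ge_at_top[of "norm (X \<omega>)"] by eventually_elim (simp add: indicator_def)
      then show "((\<lambda>R. (norm (X \<omega>))\<^sup>2 * indicator {x. R < norm x} (X \<omega>)) \<longlongrightarrow> 0) at_top"
        by (rule tendsto_eventually)
    qed
  qed (auto simp: indicator_def)
  then show ?thesis
    by simp
qed

lemma prob_norm_le_ge:
  fixes X :: "'a \<Rightarrow> 'b::real_normed_vector"
  assumes M: "prob_space M" and [measurable]: "X \<in> borel_measurable M"
    and X2: "integrable M (\<lambda>\<omega>. (norm (X \<omega>))\<^sup>2)" and R: "1 \<le> R"
  shows "1 - tail_second_moment M X R \<le> measure M {\<omega>\<in>space M. norm (X \<omega>) \<le> R}"
proof -
  interpret prob_space M by (rule M)
  let ?A = "{\<omega>\<in>space M. R < norm (X \<omega>)}"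
  have "measure M ?A = (\<integral> \<omega>. indicator ?A \<omega> \<partial>M)"
    by simp
  also have "\<dots> = (\<integral> \<omega>. indicator {x. R < norm x} (X \<omega>) \<partial>M)"
    by (auto intro!: Bochner_Integration.integral_cong simp: indicator_def)
  also have "\<dots> \<le> tail_second_moment M X R"
    unfolding tail_second_moment_def
  proof (rule integral_mono)
    show "integrable M (\<lambda>\<omega>. indicator {x. R < norm x} (X \<omega>) :: real)"
      using integrable_bounded[of "\<lambda>\<omega>. indicator {x. R < norm x} (X \<omega>)" 1] by (simp add: indicator_def)
    show "integrable M (\<lambda>\<omega>. (norm (X \<omega>))\<^sup>2 * indicator {x. R < norm x} (X \<omega>))"
      by (rule Bochner_Integration.integrable_bound[OF X2]) (auto intro!: AE_I2 simp: indicator_def)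
    show "indicator {x. R < norm x} (X \<omega>) \<le> (norm (X \<omega>))\<^sup>2 * indicator {x. R < norm x} (X \<omega>)" for \<omega>
      using R one_le_power[of "norm (X \<omega>)" 2] by (auto simp: indicator_def)
  qed
  finally have "measure M ?A \<le> tail_second_moment M X R" .
  moreover have "space M - ?A = {\<omega>\<in>space M. norm (X \<omega>) \<le> R}"
    by auto
  ultimately show ?thesis
    using prob_compl[of ?A] by simp
qed

lemma direction_bound_le:
  fixes R p \<tau> J \<epsilon> :: real
  assumes R: "1 \<le> R" and p: "1 / 2 \<le> p" and \<tau>: "0 \<le> \<tau>" "\<tau> \<le> 1 / 2" "\<tau> \<le> \<epsilon> / 20"
    and J: "0 \<le> J" "J \<le> \<epsilon> / (32 * R\<^sup>2)"
  shows "8 * R\<^sup>2 * J / p + 2 * \<tau> + 2 * (\<tau> / (R * p))\<^sup>2 \<le> \<epsilon>"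
proof -
  have "8 * R\<^sup>2 * J / p \<le> 8 * R\<^sup>2 * J / (1 / 2)"
    using R p J by (intro divide_left_mono) auto
  also have "\<dots> \<le> \<epsilon> / 2"
    using J(2) R by (simp add: field_simps)
  finally have main: "8 * R\<^sup>2 * J / p \<le> \<epsilon> / 2" .
  have "1 / 2 \<le> R * p"
    using mult_mono[OF R p] R by simp
  then have "\<tau> / (R * p) \<le> \<tau> / (1 / 2)"
    using \<tau>(1) by (intro divide_left_mono) auto
  then have "(\<tau> / (R * p))\<^sup>2 \<le> (2 * \<tau>)\<^sup>2"
    using \<tau>(1) R p by (intro power_mono) auto
  also have "\<dots> \<le> 4 * \<tau>"
    using mult_left_mono[OF \<tau>(2) \<tau>(1)]
    by (simp add: power2_eq_square) (use mult_nonneg_nonneg[OF \<tau>(1) \<tau>(1)] in linarith)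
  finally show ?thesis
    using main \<tau> by linarith
qed

lemma exists_radius_small_tail:
  fixes X :: "'a \<Rightarrow> 'b::real_normed_vector"
  assumes M: "prob_space M" and X [measurable]: "X \<in> borel_measurable M"
    and X2: "integrable M (\<lambda>\<omega>. (norm (X \<omega>))\<^sup>2)" and \<epsilon>: "0 < \<epsilon>"
  obtains R where "1 \<le> R" and "tail_second_moment M X R \<le> 1 / 2" and "tail_second_moment M X R \<le> \<epsilon> / 20"
    and "1 / 2 \<le> measure M {\<omega>\<in>space M. norm (X \<omega>) \<le> R}"
proof -
  have "eventually (\<lambda>R. 1 \<le> R \<and> tail_second_moment M X R < min (1 / 2) (\<epsilon> / 20)) at_top"
    using order_tendstoD(2)[OF tendsto_tail_second_moment[OF X X2], of "min (1 / 2) (\<epsilon> / 20)"] \<epsilon>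
    by (auto intro: eventually_conj eventually_ge_at_top)
  then obtain R where R: "1 \<le> R" and \<tau>: "tail_second_moment M X R < min (1 / 2) (\<epsilon> / 20)"
    by (auto simp: eventually_at_top_linorder)
  moreover have "1 / 2 \<le> measure M {\<omega>\<in>space M. norm (X \<omega>) \<le> R}"
    using prob_norm_le_ge[OF M X X2 R] \<tau> by linarith
  ultimately show ?thesis
    using that by simp
qed

lemma filterlim_exp_div_sqrt_at_right_0:
  assumes "0 < R"
  shows "filterlim (\<lambda>t. exp (- t) * R / sqrt (1 - exp (- 2 * t))) (at_right 0) at_top"
proof (rule tendsto_imp_filterlim_at_right)
  have "((\<lambda>t. exp (- t) / sqrt (1 - exp (- 2 * t))) \<longlongrightarrow> 0) at_top"
    by real_asymp
  from tendsto_mult_right_zero[OF this, of R]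
  show "((\<lambda>t. exp (- t) * R / sqrt (1 - exp (- 2 * t))) \<longlongrightarrow> 0) at_top"
    by (simp add: mult_ac)
  show "eventually (\<lambda>t. 0 < exp (- t) * R / sqrt (1 - exp (- 2 * t))) at_top"
    using eventually_gt_at_top[of 0] by eventually_elim (use assms in simp)
qed

lemma nn_integral_cond_exp_direction_le:
  fixes M :: "'a measure" and X N :: "'a \<Rightarrow> real ^ 'n" and \<alpha> :: "real ^ 'n" and a s R \<epsilon> :: real
  assumes M: "prob_space M"
    and X [measurable]: "X \<in> borel_measurable M" and N [measurable]: "N \<in> borel_measurable M"
    and N_law: "distr M borel N = std_gauss" and indep: "prob_space.indep_var M borel X borel N"
    and X2: "integrable M (\<lambda>\<omega>. (norm (X \<omega>))\<^sup>2)" and mean: "(\<integral> \<omega>. X \<omega> \<partial>M) = 0"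
    and \<alpha>: "norm \<alpha> = 1" and a: "0 \<le> a" and s: "0 < s" and R: "1 \<le> R" and b1: "a * R / s \<le> 1"
    and p: "1 / 2 \<le> measure M {\<omega>\<in>space M. norm (X \<omega>) \<le> R}"
    and \<tau>: "tail_second_moment M X R \<le> 1 / 2" "tail_second_moment M X R \<le> \<epsilon> / 20"
    and J: "(\<integral> y. shift_defect (a * R / s) y \<partial>(std_gauss :: (real ^ 'n) measure)) \<le> \<epsilon> / (32 * R\<^sup>2)"
  shows "(\<integral>\<^sup>+ \<omega>. ennreal ((real_cond_exp M (vimage_algebra (space M) (\<lambda>\<omega>. a *\<^sub>R X \<omega> + s *\<^sub>R N \<omega>) borel)
      (\<lambda>\<omega>. \<alpha> \<bullet> X \<omega>) \<omega>)\<^sup>2) \<partial>M) \<le> ennreal \<epsilon>"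
proof -
  have "0 \<le> a * R / s"
    using a s R by simp
  then have "0 \<le> (\<integral> y. shift_defect (a * R / s) y \<partial>(std_gauss :: (real ^ 'n) measure))"
    by (simp add: integral_nonneg_AE shift_defect_nonneg)
  note bound = integral_cond_exp_direction_square_le[OF M X N N_law indep X2 mean \<alpha> a s R b1]
    direction_bound_le[OF R p tail_second_moment_nonneg \<tau> this J]
  show ?thesis
    using p bound by (simp add: nn_integral_eq_integral ennreal_leI)
qed

lemma tendsto_SUP_cond_exp_square_zero:
  fixes M :: "'a measure" and X N :: "'a \<Rightarrow> real ^ 'n"
  assumes M: "prob_space M"
    and X [measurable]: "X \<in> borel_measurable M" and N [measurable]: "N \<in> borel_measurable M"
    and N_law: "distr M borel N = std_gauss" and indep: "prob_space.indep_var M borel X borel N"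
    and X2: "integrable M (\<lambda>\<omega>. (norm (X \<omega>))\<^sup>2)" and mean: "(\<integral> \<omega>. X \<omega> \<partial>M) = 0"
  shows "((\<lambda>t. SUP \<alpha>\<in>{\<alpha>::real ^ 'n. norm \<alpha> = 1}. \<integral>\<^sup>+ \<omega>. ennreal ((real_cond_exp M
      (vimage_algebra (space M) (\<lambda>\<omega>. exp (- t) *\<^sub>R X \<omega> + sqrt (1 - exp (- 2 * t)) *\<^sub>R N \<omega>) borel)
      (\<lambda>\<omega>. \<alpha> \<bullet> X \<omega>) \<omega>)\<^sup>2) \<partial>M) \<longlongrightarrow> 0) at_top"
proof (rule order_tendstoI)
  fix e :: ennreal
  assume "0 < e"
  then obtain x where x: "0 < x" "x < e"
    using dense by blast
  then have "x < \<top>"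
    using top_greatest order.strict_trans2 by blast
  define \<epsilon> where "\<epsilon> = enn2real x"
  have \<epsilon>: "0 < \<epsilon>" "ennreal \<epsilon> < e"
    using x \<open>x < \<top>\<close> by (simp_all add: \<epsilon>_def enn2real_positive_iff)
  obtain R where R: "1 \<le> R" and \<tau>: "tail_second_moment M X R \<le> 1 / 2" "tail_second_moment M X R \<le> \<epsilon> / 20"
    and p: "1 / 2 \<le> measure M {\<omega>\<in>space M. norm (X \<omega>) \<le> R}"
    using exists_radius_small_tail[OF M X X2 \<epsilon>(1)] by blast
  define b where "b t = exp (- t) * R / sqrt (1 - exp (- 2 * t))" for t :: real
  have "filterlim b (at_right 0) at_top"
    unfolding b_def[abs_def] using R by (intro filterlim_exp_div_sqrt_at_right_0) simp
  from filterlim_compose[OF tendsto_integral_shift_defect this]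
  have "((\<lambda>t. \<integral> y. shift_defect (b t) y \<partial>(std_gauss :: (real ^ 'n) measure)) \<longlongrightarrow> 0) at_top"
    using prob_space.prob_space_distr[OF M N] N_law by simp
  then have "eventually (\<lambda>t. (\<integral> y. shift_defect (b t) y \<partial>(std_gauss :: (real ^ 'n) measure)) < \<epsilon> / (32 * R\<^sup>2)) at_top"
    using \<epsilon> R by (intro order_tendstoD(2)) auto
  moreover have "eventually (\<lambda>t. b t < 1) at_top"
    using \<open>filterlim b (at_right 0) at_top\<close> unfolding filterlim_at by (auto intro: order_tendstoD(2))
  ultimately show "eventually (\<lambda>t. (SUP \<alpha>\<in>{\<alpha>::real ^ 'n. norm \<alpha> = 1}. \<integral>\<^sup>+ \<omega>. ennreal ((real_cond_exp M
      (vimage_algebra (space M) (\<lambda>\<omega>. exp (- t) *\<^sub>R X \<omega> + sqrt (1 - exp (- 2 * t)) *\<^sub>R N \<omega>) borel)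
      (\<lambda>\<omega>. \<alpha> \<bullet> X \<omega>) \<omega>)\<^sup>2) \<partial>M) < e) at_top"
    using eventually_gt_at_top[of 0]
  proof eventually_elim
    case (elim t)
    then have "(SUP \<alpha>\<in>{\<alpha>::real ^ 'n. norm \<alpha> = 1}. \<integral>\<^sup>+ \<omega>. ennreal ((real_cond_exp M
      (vimage_algebra (space M) (\<lambda>\<omega>. exp (- t) *\<^sub>R X \<omega> + sqrt (1 - exp (- 2 * t)) *\<^sub>R N \<omega>) borel)
      (\<lambda>\<omega>. \<alpha> \<bullet> X \<omega>) \<omega>)\<^sup>2) \<partial>M) \<le> ennreal \<epsilon>"
      using \<tau> by (intro SUP_least nn_integral_cond_exp_direction_le[OF M X N N_law indep X2 mean _ _ _ R _ p])
        (auto simp: b_def)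
    then show ?case
      using \<epsilon>(2) by (rule le_less_trans)
  qed
qed (simp add: less_le_not_le)

theorem lemma5p1:
  fixes M :: "'a measure"
    and f :: "real ^ 'n \<Rightarrow> real"
    and X N :: "'a \<Rightarrow> real ^ 'n"
    and \<rho> :: "real \<Rightarrow> ennreal"
  assumes smooth_f: "smooth f"
    and f_nonneg: "\<And>x. f x \<ge> 0"
    and f_prob: "(\<integral>\<^sup>+ x. ennreal (f x) \<partial>std_gauss) = 1"
    and moment2: "(\<integral>\<^sup>+ x. ennreal ((norm x)\<^sup>2 * f x) \<partial>std_gauss) < \<infinity>"
    and fisher: "fisher_info f < \<infinity>"
    and M: "prob_space M"
    and X_rv: "X \<in> borel_measurable M"
    and N_rv: "N \<in> borel_measurable M"
    and X_law: "distr M borel X = density std_gauss (\<lambda>x. ennreal (f x))"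
    and N_law: "distr M borel N = std_gauss"
    and indep: "prob_space.indep_var M borel X borel N"
    and mean0: "(\<integral>\<omega>. X \<omega> \<partial>M) = 0"
    and \<rho>_def: "\<And>t. t \<ge> 0 \<Longrightarrow> \<rho> t =
       (SUP \<alpha>\<in>{\<alpha>::real ^ 'n. norm \<alpha> = 1}.
          \<integral>\<^sup>+ \<omega>. ennreal ((real_cond_exp M
              (vimage_algebra (space M)
                 (\<lambda>\<omega>. exp (- t) *\<^sub>R X \<omega> + sqrt (1 - exp (- 2 * t)) *\<^sub>R N \<omega>) borel)
              (\<lambda>\<omega>. \<alpha> \<bullet> X \<omega>) \<omega>)\<^sup>2) \<partial>M)"
  shows "(\<rho> \<longlongrightarrow> 0) at_top"
proof -
  have [measurable]: "f \<in> borel_measurable borel"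
    using smooth_f unfolding smooth_def by (metis Ck.simps(1) borel_measurable_continuous_onI)
  have "(\<integral>\<^sup>+ \<omega>. ennreal ((norm (X \<omega>))\<^sup>2) \<partial>M) = (\<integral>\<^sup>+ x. ennreal (f x) * ennreal ((norm x)\<^sup>2) \<partial>std_gauss)"
    using nn_integral_distr[OF X_rv, of "\<lambda>x. ennreal ((norm x)\<^sup>2)"]
    by (simp add: X_law nn_integral_density)
  also have "\<dots> = (\<integral>\<^sup>+ x. ennreal ((norm x)\<^sup>2 * f x) \<partial>std_gauss)"
    using f_nonneg by (simp add: ennreal_mult'[symmetric] mult.commute)
  finally have X2: "integrable M (\<lambda>\<omega>. (norm (X \<omega>))\<^sup>2)"
    using moment2 X_rv by (intro integrableI_nonneg) auto
  have "eventually (\<lambda>t. (SUP \<alpha>\<in>{\<alpha>::real ^ 'n. norm \<alpha> = 1}. \<integral>\<^sup>+ \<omega>. ennreal ((real_cond_exp M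
      (vimage_algebra (space M) (\<lambda>\<omega>. exp (- t) *\<^sub>R X \<omega> + sqrt (1 - exp (- 2 * t)) *\<^sub>R N \<omega>) borel)
      (\<lambda>\<omega>. \<alpha> \<bullet> X \<omega>) \<omega>)\<^sup>2) \<partial>M) = \<rho> t) at_top"
    using eventually_ge_at_top[of 0] by eventually_elim (simp add: \<rho>_def)
  then show ?thesis
    using tendsto_SUP_cond_exp_square_zero[OF M X_rv N_rv N_law indep X2 mean0] by (rule tendsto_cong[THEN iffD1])
qed

end
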